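(* Let $N\ge2$ and $1>\mu_1>\mu_2>\dots>\mu_N>0$. Consider the partial monitoring game with $M=2^N$ outcomes and $A=2$ symbols where $L=H\in\mathbb{R}^{N\times2^N}$ with $l_{i,j}=h_{i,j}=\mathbb{1}[(j-1\bmod 2^i)<2^{i-1}]+1$, and opponent strategy $p^*\in\mathcal{P}_{2^N}$ with $p^*_j=\prod_{i\in[N]}(\mu_i+(1-2\mu_i)\mathbb{1}[(j-1\bmod2^i)<2^{i-1}])$ (the $N$-armed Bernoulli bandit with means $\mu_i$ represented as partial monitoring). Then: (1) the set $\mathcal{R}^*_1(p^*,\{S_ip^*,0\})$ is a singleton; (2) with $\mathcal{S}_\delta=\{q\in\mathcal{P}_M:D(S_1p^*\Vert S_1q)\le\delta\}$, $\mathrm{cl}(\mathrm{int}(\mathcal{C}_1^c)\cap\mathcal{S}_\delta)=\mathrm{cl}(\mathrm{cl}(\mathcal{C}_1^c)\cap\mathcal{S}_\delta)$ for all $\delta\ge0$ in a neighborhood of $0$; and (3) $C_1(p^*,\{S_ip^*\})=\sum_{i\ne1}\Delta_i/d(\mu_i\Vert\mu_1)$, where $\Delta_i=(L_i-L_1)^\top p^*$ and $d(p\Vert q)=p\log(p/q)+(1-p)\log((1-p)/(1-q))$.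
   Context: $\mathcal{P}_M$ is the set of probability distributions on $[M]$; $L_i$ is the $i$-th row of $L$. Signal matrices $S_i\in\{0,1\}^{A\times M}$ with $(S_i)_{k,j}=1$ iff $h_{i,j}=k$ (so $(S_ip^* )_1=\mu_i$). Cells $\mathcal{C}_j=\{q\in\mathcal{P}_M:\forall i\ne j,(L_j-L_i)^\top q\le0\}$, $\mathcal{C}_j^c=\mathcal{P}_M\setminus\mathcal{C}_j$; $\mathrm{cl},\mathrm{int}$ denote closure and interior in $\mathcal{P}_M$. $D$ is the KL divergence of discrete distributions ($0\log(0/0)=0$), $(x)_+=\max(x,0)$. For distributions $p_i$ on $[A]$ and $\delta_i\ge0$: $\mathcal{R}_j(\{p_i,\delta_i\})=\{\{r_i\}_{i\ne j}\in[0,\infty)^{N-1}:\inf_{q\in\mathrm{cl}(\mathcal{C}_j^c):D(p_j\Vert S_jq)\le\delta_j}\sum_{i\ne j}r_i(D(p_i\Vert S_iq)-\delta_i)_+\ge1\}$, $C_j(p,\{p_i,\delta_i\})=\inf_{\{r_i\}\in\mathcal{R}_j(\{p_i,\delta_i\})}\sum_{i\ne j}r_i(L_i-L_j)^\top p$, $C_j(p,\{p_i\})=C_j(p,\{p_i,0\})$, and $\mathcal{R}^*_j(p,\{p_i,\delta_i\})$ is the set of minimizers. *)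

theory Defs
  imports "HOL-Analysis.Analysis"
begin

text \<open>Outcomes are indexed by 1..M, actions by 1..N, symbols by 1..A. The topology on the probsimplex is the subspace topology of the
  product topology on nat => real (= the Euclidean topology on the finitely many
  coordinates 1..M).\<close>

definition probsimplex :: "nat \<Rightarrow> (nat \<Rightarrow> real) set" where
  "probsimplex M = {q. (\<forall>j. 0 \<le> q j) \<and> (\<forall>j. j \<notin> {1..M} \<longrightarrow> q j = 0) \<and> (\<Sum>j=1..M. q j) = 1}"

definition clP :: "nat \<Rightarrow> (nat \<Rightarrow> real) set \<Rightarrow> (nat \<Rightarrow> real) set" where
  "clP M X = (top_of_set (probsimplex M)) closure_of X"

definition intP :: "nat \<Rightarrow> (nat \<Rightarrow> real) set \<Rightarrow> (nat \<Rightarrow> real) set" where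
  "intP M X = (top_of_set (probsimplex M)) interior_of X"

definition sigvec :: "nat \<Rightarrow> (nat \<Rightarrow> nat \<Rightarrow> nat) \<Rightarrow> nat \<Rightarrow> (nat \<Rightarrow> real) \<Rightarrow> (nat \<Rightarrow> real)" where
  "sigvec M H i q = (\<lambda>k. \<Sum>j\<in>{j\<in>{1..M}. H i j = k}. q j)"

definition KL :: "nat \<Rightarrow> (nat \<Rightarrow> real) \<Rightarrow> (nat \<Rightarrow> real) \<Rightarrow> ereal" where
  "KL A p q = (\<Sum>k=1..A. (if p k = 0 then 0 else if q k = 0 then \<infinity>
                            else ereal (p k * ln (p k / q k))))"

definition lossdiff :: "nat \<Rightarrow> (nat \<Rightarrow> nat \<Rightarrow> real) \<Rightarrow> nat \<Rightarrow> nat \<Rightarrow> (nat \<Rightarrow> real) \<Rightarrow> real" where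
  "lossdiff M L i j p = (\<Sum>k=1..M. (L i k - L j k) * p k)"

definition cell :: "nat \<Rightarrow> nat \<Rightarrow> (nat \<Rightarrow> nat \<Rightarrow> real) \<Rightarrow> nat \<Rightarrow> (nat \<Rightarrow> real) set" where
  "cell N M L j = {q \<in> probsimplex M. \<forall>i\<in>{1..N}. i \<noteq> j \<longrightarrow> lossdiff M L j i q \<le> 0}"

definition cellc :: "nat \<Rightarrow> nat \<Rightarrow> (nat \<Rightarrow> nat \<Rightarrow> real) \<Rightarrow> nat \<Rightarrow> (nat \<Rightarrow> real) set" where
  "cellc N M L j = probsimplex M - cell N M L j"

definition Rset :: "nat \<Rightarrow> nat \<Rightarrow> nat \<Rightarrow> (nat \<Rightarrow> nat \<Rightarrow> real) \<Rightarrow> (nat \<Rightarrow> nat \<Rightarrow> nat) \<Rightarrow> nat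
    \<Rightarrow> (nat \<Rightarrow> nat \<Rightarrow> real) \<Rightarrow> (nat \<Rightarrow> real) \<Rightarrow> (nat \<Rightarrow> real) set" where
  "Rset N M A L H j P \<delta> =
     {r. (\<forall>i. 0 \<le> r i) \<and> (\<forall>i. i \<notin> {1..N} - {j} \<longrightarrow> r i = 0) \<and>
         (INF q \<in> {q \<in> clP M (cellc N M L j). KL A (P j) (sigvec M H j q) \<le> ereal (\<delta> j)}.
             (\<Sum>i\<in>{1..N} - {j}. ereal (r i) * max (KL A (P i) (sigvec M H i q) - ereal (\<delta> i)) 0))
           \<ge> 1}"

definition Cval :: "nat \<Rightarrow> nat \<Rightarrow> nat \<Rightarrow> (nat \<Rightarrow> nat \<Rightarrow> real) \<Rightarrow> (nat \<Rightarrow> nat \<Rightarrow> nat) \<Rightarrow> nat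
    \<Rightarrow> (nat \<Rightarrow> real) \<Rightarrow> (nat \<Rightarrow> nat \<Rightarrow> real) \<Rightarrow> (nat \<Rightarrow> real) \<Rightarrow> ereal" where
  "Cval N M A L H j p P \<delta> =
     (INF r \<in> Rset N M A L H j P \<delta>. ereal (\<Sum>i\<in>{1..N} - {j}. r i * lossdiff M L i j p))"

definition Rstar :: "nat \<Rightarrow> nat \<Rightarrow> nat \<Rightarrow> (nat \<Rightarrow> nat \<Rightarrow> real) \<Rightarrow> (nat \<Rightarrow> nat \<Rightarrow> nat) \<Rightarrow> nat
    \<Rightarrow> (nat \<Rightarrow> real) \<Rightarrow> (nat \<Rightarrow> nat \<Rightarrow> real) \<Rightarrow> (nat \<Rightarrow> real) \<Rightarrow> (nat \<Rightarrow> real) set" where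
  "Rstar N M A L H j p P \<delta> =
     {r \<in> Rset N M A L H j P \<delta>.
        ereal (\<Sum>i\<in>{1..N} - {j}. r i * lossdiff M L i j p) = Cval N M A L H j p P \<delta>}"

definition bitind :: "nat \<Rightarrow> nat \<Rightarrow> bool" where
  "bitind i j \<longleftrightarrow> (j - 1) mod 2 ^ i < 2 ^ (i - 1)"

definition bandL :: "nat \<Rightarrow> nat \<Rightarrow> real" where
  "bandL i j = (if bitind i j then 1 else 0) + 1"

definition bandH :: "nat \<Rightarrow> nat \<Rightarrow> nat" where
  "bandH i j = (if bitind i j then 1 else 0) + 1"

definition bandp :: "nat \<Rightarrow> (nat \<Rightarrow> real) \<Rightarrow> nat \<Rightarrow> real" where
  "bandp N \<mu> j = (if j \<in> {1..2 ^ N}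
      then (\<Prod>i\<in>{1..N}. \<mu> i + (1 - 2 * \<mu> i) * (if bitind i j then 1 else 0)) else 0)"

definition bern_kl :: "real \<Rightarrow> real \<Rightarrow> real" where
  "bern_kl p q = p * ln (p / q) + (1 - p) * ln ((1 - p) / (1 - q))"

end

theory Submission
  imports Defs
begin

text \<open>Under any \<open>q\<close> the signal of action \<open>i\<close> is Bernoulli with the \<open>i\<close>-th arm mean \<open>m\<^sub>i(q)\<close>,
  and \<open>q\<close> lies outside the cell of action \<open>1\<close> iff \<open>m\<^sub>1(q) < m\<^sub>i(q)\<close> for some \<open>i\<close>. An alternative
  of KL-radius \<open>0\<close> has \<open>m\<^sub>1 = \<mu>\<^sub>1\<close> and some \<open>m\<^sub>i \<ge> \<mu>\<^sub>1\<close>, so by monotonicity of the Bernoulli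
  divergence it charges arm \<open>i\<close> at least \<open>d(\<mu>\<^sub>i\<parallel>\<mu>\<^sub>1)\<close>; the product distribution with arm \<open>i\<close>'s
  mean raised to \<open>\<mu>\<^sub>1\<close> charges exactly that and nothing else. So \<open>\<R>\<^sub>1\<close> is the orthant
  \<open>r\<^sub>i \<ge> 1/d(\<mu>\<^sub>i\<parallel>\<mu>\<^sub>1)\<close>, on which the positive linear cost has its unique minimiser at the corner.
  For the closure identity: the complement of the cell is relatively open, and any point of its
  closure with \<open>m\<^sub>1 < 1\<close> is the limit of a segment inside the complement along which \<open>m\<^sub>1\<close>,
  hence the divergence defining \<open>\<S>\<^sub>\<delta>\<close>, is constant.\<close>

lemma bitind_add_pow2:
  assumes "k \<le> N" "0 < j"
  shows "bitind k (j + 2^N) = bitind k j"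
proof -
  have "(2::nat)^k dvd 2^N" using assms(1) by (rule le_imp_power_dvd)
  then have "(j - 1 + 2^N) mod 2^k = (j - 1) mod 2^k"
    by (metis dvd_imp_mod_0 mod_add_right_eq add.right_neutral)
  then show ?thesis using assms(2) by (simp add: bitind_def)
qed

lemma bitind_top_lower: "j \<in> {1..2^N} \<Longrightarrow> bitind (Suc N) j"
  by (auto simp: bitind_def)

lemma bitind_top_upper: "j \<in> {1..2^N} \<Longrightarrow> \<not> bitind (Suc N) (j + 2^N)"
  by (auto simp: bitind_def)

lemma sum_prod_bitind:
  fixes g :: "nat \<Rightarrow> bool \<Rightarrow> 'a::comm_semiring_1"
  shows "(\<Sum>j=1..2^N. \<Prod>k=1..N. g k (bitind k j)) = (\<Prod>k=1..N. g k True + g k False)"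
proof (induction N)
  case 0
  then show ?case by simp
next
  case (Suc N)
  let ?P = "\<lambda>j. \<Prod>k=1..N. g k (bitind k j)"
  have halves: "(\<Sum>j=1..2^Suc N. F j) = (\<Sum>j=1..2^N. F j) + (\<Sum>j=1..2^N. F (j + 2^N))"
    for F :: "nat \<Rightarrow> 'a"
  proof -
    have split: "{1..2^Suc N} = {1..2^N} \<union> {1 + 2^N..2^N + (2::nat)^N}" by auto
    have "(\<Sum>j=1..2^Suc N. F j) = (\<Sum>j=1..2^N. F j) + (\<Sum>j=1 + 2^N..2^N + 2^N. F j)"
      unfolding split by (rule sum.union_disjoint) auto
    then show ?thesis by (simp only: sum.shift_bounds_cl_nat_ivl)
  qed
  have lower: "(\<Prod>k=1..Suc N. g k (bitind k j)) = ?P j * g (Suc N) True"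
    if "j \<in> {1..2^N}" for j
    using that by (simp add: prod.cl_ivl_Suc bitind_top_lower)
  have upper: "(\<Prod>k=1..Suc N. g k (bitind k (j + 2^N))) = ?P j * g (Suc N) False"
    if "j \<in> {1..2^N}" for j
    using that by (auto simp: prod.cl_ivl_Suc bitind_top_upper bitind_add_pow2 intro!: prod.cong)
  have "(\<Sum>j=1..2^Suc N. \<Prod>k=1..Suc N. g k (bitind k j))
      = (\<Sum>j=1..2^N. \<Prod>k=1..Suc N. g k (bitind k j))
        + (\<Sum>j=1..2^N. \<Prod>k=1..Suc N. g k (bitind k (j + 2^N)))"
    by (rule halves)
  also have "\<dots> = (\<Sum>j=1..2^N. ?P j) * g (Suc N) True + (\<Sum>j=1..2^N. ?P j) * g (Suc N) False"
    by (simp only: sum.cong[OF refl lower] sum.cong[OF refl upper] sum_distrib_right)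
  finally show ?case using Suc.IH by (simp add: prod.cl_ivl_Suc distrib_left)
qed

abbreviation arm_mean :: "nat \<Rightarrow> nat \<Rightarrow> (nat \<Rightarrow> real) \<Rightarrow> real" where
  "arm_mean M i q \<equiv> sigvec M bandH i q 1"

lemma arm_mean_eq: "arm_mean M i q = (\<Sum>j=1..M. if bitind i j then 0 else q j)"
  unfolding sigvec_def by (subst sum.inter_filter) (auto simp: bandH_def intro!: sum.cong)

lemma sigvec_bandH_2: "sigvec M bandH i q 2 = (\<Sum>j=1..M. if bitind i j then q j else 0)"
  unfolding sigvec_def by (subst sum.inter_filter) (auto simp: bandH_def intro!: sum.cong)

lemma sigvec_bandH_2_eq:
  assumes "q \<in> probsimplex M"
  shows "sigvec M bandH i q 2 = 1 - arm_mean M i q"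
proof -
  have "sigvec M bandH i q 2 + arm_mean M i q = (\<Sum>j=1..M. q j)"
    unfolding arm_mean_eq sigvec_bandH_2 by (subst sum.distrib[symmetric]) (auto intro!: sum.cong)
  with assms show ?thesis by (simp add: probsimplex_def)
qed

lemma sigvec_nonneg: "q \<in> probsimplex M \<Longrightarrow> 0 \<le> sigvec M H i q k"
  unfolding sigvec_def probsimplex_def by (auto intro!: sum_nonneg)

lemma arm_mean_le_1: "q \<in> probsimplex M \<Longrightarrow> arm_mean M i q \<le> 1"
  using sigvec_bandH_2_eq[of q M i] sigvec_nonneg[of q M bandH i 2] by simp

lemma continuous_on_sigvec: "continuous_on UNIV (\<lambda>q. sigvec M H i q k)"
  unfolding sigvec_def by (intro continuous_on_sum) auto

lemma sigvec_convex_comb: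
  "sigvec M H i (\<lambda>j. (1 - t) * q j + t * w j) k = (1 - t) * sigvec M H i q k + t * sigvec M H i w k"
  unfolding sigvec_def by (simp add: sum.distrib sum_distrib_left)

lemma lossdiff_bandL:
  assumes "q \<in> probsimplex M"
  shows "lossdiff M bandL a b q = arm_mean M b q - arm_mean M a q"
proof -
  have "lossdiff M bandL a b q = sigvec M bandH a q 2 - sigvec M bandH b q 2"
    unfolding lossdiff_def sigvec_bandH_2
    by (subst sum_subtractf[symmetric]) (auto simp: bandL_def intro!: sum.cong)
  then show ?thesis using sigvec_bandH_2_eq[OF assms] by simp
qed

definition bernoulli_product :: "nat \<Rightarrow> (nat \<Rightarrow> real) \<Rightarrow> nat \<Rightarrow> real" where
  "bernoulli_product N x j =
     (if j \<in> {1..2^N} then \<Prod>k=1..N. if bitind k j then 1 - x k else x k else 0)"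

lemma bandp_eq_bernoulli_product: "bandp N \<mu> = bernoulli_product N \<mu>"
  by (rule ext) (auto simp: bandp_def bernoulli_product_def algebra_simps intro!: prod.cong)

lemma bernoulli_product_in_probsimplex:
  assumes "\<forall>k\<in>{1..N}. 0 \<le> x k \<and> x k \<le> 1"
  shows "bernoulli_product N x \<in> probsimplex (2^N)"
proof -
  have "(\<Sum>j=1..2^N. bernoulli_product N x j)
      = (\<Sum>j=1..2^N. \<Prod>k=1..N. (\<lambda>k c. if c then 1 - x k else x k) k (bitind k j))"
    by (rule sum.cong) (auto simp: bernoulli_product_def)
  also have "\<dots> = 1" by (subst sum_prod_bitind) simp
  finally have "(\<Sum>j=1..2^N. bernoulli_product N x j) = 1" .
  then show ?thesis
    using assms by (auto simp: probsimplex_def bernoulli_product_def intro!: prod_nonneg)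
qed

lemma arm_mean_bernoulli_product:
  assumes "i \<in> {1..N}"
  shows "arm_mean (2^N) i (bernoulli_product N x) = x i"
proof -
  let ?g = "\<lambda>k c. if k = i \<and> c then 0 else if c then 1 - x k else x k"
  have "arm_mean (2^N) i (bernoulli_product N x) = (\<Sum>j=1..2^N. \<Prod>k=1..N. ?g k (bitind k j))"
    unfolding arm_mean_eq bernoulli_product_def
    using assms by (intro sum.cong) (auto simp: prod_zero intro!: prod.cong)
  also have "\<dots> = (\<Prod>k=1..N. ?g k True + ?g k False)" by (rule sum_prod_bitind)
  also have "\<dots> = (\<Prod>k=1..N. if k = i then x k else 1)" by (rule prod.cong) auto
  also have "\<dots> = x i" using assms by simp
  finally show ?thesis .
qed

lemma bern_kl_self: "bern_kl a a = 0"
  by (cases "a = 0"; cases "a = 1") (auto simp: bern_kl_def)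

lemma bern_kl_pos:
  assumes "0 < a" "a < 1" "0 < b" "b < 1" "a \<noteq> b"
  shows "0 < bern_kl a b"
proof -
  have split: "bern_kl a b = - (a * ln (b / a)) - (1 - a) * ln ((1 - b) / (1 - a))"
    using assms by (simp add: bern_kl_def ln_div algebra_simps)
  have "ln (b / a) < b / a - 1"
    using assms ln_le_minus_one[of "b / a"] ln_eq_minus_one[of "b / a"] by fastforce
  then have first: "a * ln (b / a) < b - a"
    using assms mult_strict_left_mono[of "ln (b / a)" "b / a - 1" a] by (simp add: field_simps)
  have "ln ((1 - b) / (1 - a)) \<le> (1 - b) / (1 - a) - 1"
    using assms by (intro ln_le_minus_one) simp
  then have second: "(1 - a) * ln ((1 - b) / (1 - a)) \<le> a - b"
    using assms mult_left_mono[of "ln ((1 - b) / (1 - a))" "(1 - b) / (1 - a) - 1" "1 - a"]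
    by (simp add: field_simps)
  show ?thesis using split first second by linarith
qed

lemma bern_kl_nonneg:
  assumes "0 < a" "a < 1" "0 < b" "b < 1"
  shows "0 \<le> bern_kl a b"
  using bern_kl_pos[OF assms] by (cases "a = b") (auto simp: bern_kl_self)

text \<open>The difference of the two sides is affine in \<open>p\<close>, nonnegative at \<open>p = b\<close> by Gibbs'
  inequality, and grows as \<open>p\<close> decreases.\<close>
lemma bern_kl_mono:
  assumes "0 < p" "p \<le> b" "b \<le> a" "a < 1"
  shows "bern_kl p b \<le> bern_kl p a"
proof -
  define u where "u = ln b - ln a"
  define v where "v = ln (1 - b) - ln (1 - a)"
  have "u \<le> 0" "0 \<le> v" using assms by (simp_all add: u_def v_def)
  have diff: "bern_kl x a - bern_kl x b = x * u + (1 - x) * v" if "0 < x" "x < 1" for x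
    using assms that by (simp add: bern_kl_def ln_div u_def v_def algebra_simps)
  have "0 \<le> bern_kl b a" using assms by (intro bern_kl_nonneg) auto
  then have "0 \<le> b * u + (1 - b) * v" using assms diff[of b] by (simp add: bern_kl_self)
  moreover have "0 \<le> (p - b) * (u - v)"
    using \<open>u \<le> 0\<close> \<open>0 \<le> v\<close> assms by (intro mult_nonpos_nonpos) auto
  ultimately have "0 \<le> p * u + (1 - p) * v" by (simp add: algebra_simps)
  then show ?thesis using diff[of p] assms by simp
qed

lemma KL_two_eq_bern_kl:
  assumes "p 1 = a" "p 2 = 1 - a" "q 1 = b" "q 2 = 1 - b" "0 < a" "a < 1" "0 < b" "b < 1"
  shows "KL 2 p q = ereal (bern_kl a b)"
  using assms by (simp add: KL_def numeral_2_eq_2 bern_kl_def)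

lemma KL_two_infinite:
  assumes "p 1 = a" "p 2 = 1 - a" "q 1 = b" "q 2 = 1 - b" "0 < a" "a < 1" "b = 0 \<or> b = 1"
  shows "KL 2 p q = \<infinity>"
  using assms by (auto simp: KL_def numeral_2_eq_2)

lemma KL_two_cong: "q' 1 = q 1 \<Longrightarrow> q' 2 = q 2 \<Longrightarrow> KL 2 p q' = KL 2 p q"
  by (simp add: KL_def numeral_2_eq_2)

lemma clP_eq: "clP M X = probsimplex M \<inter> closure (probsimplex M \<inter> X)"
  unfolding clP_def by (simp add: closure_of_subtopology)

lemma clP_mono: "X \<subseteq> Y \<Longrightarrow> clP M X \<subseteq> clP M Y"
  unfolding clP_def by (rule closure_of_mono)

lemma clP_idem [simp]: "clP M (clP M X) = clP M X"
  unfolding clP_def by simp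

lemma subset_clP: "X \<subseteq> probsimplex M \<Longrightarrow> X \<subseteq> clP M X"
  unfolding clP_def by (rule closure_of_subset) simp

lemma cellc_bandL_iff:
  "q \<in> cellc N M bandL 1 \<longleftrightarrow>
     q \<in> probsimplex M \<and> (\<exists>i\<in>{1..N} - {1}. arm_mean M 1 q < arm_mean M i q)"
proof -
  have "q \<in> cell N M bandL 1 \<longleftrightarrow>
      q \<in> probsimplex M \<and> (\<forall>i\<in>{1..N} - {1}. arm_mean M i q \<le> arm_mean M 1 q)"
    unfolding cell_def using lossdiff_bandL[of q M 1] by auto
  then show ?thesis unfolding cellc_def by (simp add: not_le) blast
qed

lemma intP_cellc_bandL: "intP M (cellc N M bandL 1) = cellc N M bandL 1"
proof -
  let ?U = "\<Union>i\<in>{1..N} - {1}. {q. arm_mean M 1 q < arm_mean M i q}"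
  have "open ?U" by (auto intro!: open_Collect_less continuous_on_sigvec)
  moreover have "cellc N M bandL 1 = probsimplex M \<inter> ?U"
    unfolding set_eq_iff cellc_bandL_iff by blast
  ultimately show ?thesis
    unfolding intP_def by (intro interior_of_openin) (simp add: openin_open_Int)
qed

lemma clP_cellc_bandLD:
  assumes "q \<in> clP M (cellc N M bandL 1)"
  shows "q \<in> probsimplex M \<and> (\<exists>i\<in>{1..N} - {1}. arm_mean M 1 q \<le> arm_mean M i q)"
proof -
  let ?K = "\<Union>i\<in>{1..N} - {1}. {q. arm_mean M 1 q \<le> arm_mean M i q}"
  have "closed ?K" by (intro closed_UN) (auto intro!: closed_Collect_le continuous_on_sigvec)
  moreover have "probsimplex M \<inter> cellc N M bandL 1 \<subseteq> ?K"
  proof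
    fix x assume "x \<in> probsimplex M \<inter> cellc N M bandL 1"
    then obtain i where "i \<in> {1..N} - {1}" "arm_mean M 1 x < arm_mean M i x"
      using cellc_bandL_iff[of x N M] by blast
    then show "x \<in> ?K" by (intro UN_I[of i]) auto
  qed
  ultimately have "closure (probsimplex M \<inter> cellc N M bandL 1) \<subseteq> ?K"
    by (rule closure_minimal[rotated])
  then show ?thesis using assms unfolding clP_eq by auto
qed

text \<open>The segment from \<open>q\<close> towards the product distribution with means \<open>q\<close>'s first mean and
  \<open>1\<close> elsewhere keeps the mean of arm \<open>1\<close> fixed and strictly raises that of arm \<open>i\<close>.\<close>
lemma in_clP_cellc_bandL:
  assumes q: "q \<in> probsimplex (2^N)" and i: "i \<in> {1..N} - {1}"
    and le: "arm_mean (2^N) 1 q \<le> arm_mean (2^N) i q"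
    and lt: "arm_mean (2^N) 1 q < 1"
  shows "q \<in> clP (2^N) {q' \<in> cellc N (2^N) bandL 1. arm_mean (2^N) 1 q' = arm_mean (2^N) 1 q}"
proof -
  let ?M = "(2::nat)^N"
  let ?m = "\<lambda>k q. arm_mean ?M k q"
  let ?X = "{q' \<in> cellc N ?M bandL 1. ?m 1 q' = ?m 1 q}"
  define w where "w = bernoulli_product N (\<lambda>k. if k = 1 then ?m 1 q else 1)"
  have w: "w \<in> probsimplex ?M" unfolding w_def
    using sigvec_nonneg[OF q] arm_mean_le_1[OF q] by (intro bernoulli_product_in_probsimplex) auto
  have w1: "?m 1 w = ?m 1 q" and wi: "?m i w = 1"
    unfolding w_def using i by (subst arm_mean_bernoulli_product; auto)+
  define f where "f = (\<lambda>t::real. \<lambda>j. (1 - t) * q j + t * w j)"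
  have fX: "f t \<in> ?X" if t: "0 < t" "t \<le> 1" for t
  proof -
    have "f t \<in> probsimplex ?M"
      using q w t by (auto simp: probsimplex_def f_def sum.distrib sum_distrib_left[symmetric])
    moreover have "?m 1 (f t) = ?m 1 q"
      unfolding f_def sigvec_convex_comb w1 by (simp add: algebra_simps)
    moreover have "?m 1 q < ?m i (f t)"
    proof -
      have "(1 - t) * ?m 1 q \<le> (1 - t) * ?m i q" using le t by (intro mult_left_mono) auto
      moreover have "t * ?m 1 q < t" using lt t by simp
      ultimately show ?thesis unfolding f_def sigvec_convex_comb wi by (simp add: algebra_simps)
    qed
    ultimately show ?thesis using i by (auto simp: cellc_bandL_iff simp del: One_nat_def)
  qed
  have "continuous_on (closure {0<..1}) f"
    unfolding f_def by (intro continuous_on_coordinatewise_then_product continuous_intros)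
  then have "f ` closure {0<..1} \<subseteq> closure ?X"
    using fX by (intro image_closure_subset) (auto intro: closure_subset[THEN subsetD])
  moreover have "f 0 = q" unfolding f_def by simp
  ultimately have "q \<in> closure ?X" by force
  moreover have "probsimplex ?M \<inter> ?X = ?X" by (auto simp: cellc_def)
  ultimately show ?thesis using q unfolding clP_eq by auto
qed

lemma clP_intP_cellc_bandL_inter:
  assumes S_lt: "\<forall>q\<in>S. arm_mean (2^N) 1 q < 1"
    and S_mean: "\<And>q q'. q \<in> S \<Longrightarrow> q' \<in> probsimplex (2^N) \<Longrightarrow>
        arm_mean (2^N) 1 q' = arm_mean (2^N) 1 q \<Longrightarrow> q' \<in> S"
  shows "clP (2^N) (intP (2^N) (cellc N (2^N) bandL 1) \<inter> S)
       = clP (2^N) (clP (2^N) (cellc N (2^N) bandL 1) \<inter> S)"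
proof
  let ?M = "(2::nat)^N"
  let ?C = "cellc N ?M bandL 1"
  show "clP ?M (intP ?M ?C \<inter> S) \<subseteq> clP ?M (clP ?M ?C \<inter> S)"
    unfolding intP_cellc_bandL using subset_clP[of ?C ?M] by (intro clP_mono) (auto simp: cellc_def)
  have "clP ?M ?C \<inter> S \<subseteq> clP ?M (?C \<inter> S)"
  proof
    fix q assume qCS: "q \<in> clP ?M ?C \<inter> S"
    then obtain i where q: "q \<in> probsimplex ?M" and i: "i \<in> {1..N} - {1}"
      and le: "arm_mean ?M 1 q \<le> arm_mean ?M i q"
      using clP_cellc_bandLD by blast
    have "q \<in> clP ?M {q' \<in> ?C. arm_mean ?M 1 q' = arm_mean ?M 1 q}"
      using qCS S_lt by (intro in_clP_cellc_bandL[OF q i le]) auto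
    moreover have "{q' \<in> ?C. arm_mean ?M 1 q' = arm_mean ?M 1 q} \<subseteq> ?C \<inter> S"
      using qCS S_mean by (auto simp: cellc_def)
    ultimately show "q \<in> clP ?M (?C \<inter> S)" using clP_mono by blast
  qed
  then have "clP ?M (clP ?M ?C \<inter> S) \<subseteq> clP ?M (clP ?M (?C \<inter> S))" by (rule clP_mono)
  then show "clP ?M (clP ?M ?C \<inter> S) \<subseteq> clP ?M (intP ?M ?C \<inter> S)"
    unfolding intP_cellc_bandL clP_idem .
qed

lemma linear_minimization_shifted_orthant:
  fixes d \<Delta> :: "nat \<Rightarrow> real"
  assumes "finite I" and d: "\<forall>i\<in>I. 0 < d i" and \<Delta>: "\<forall>i\<in>I. 0 < \<Delta> i"
  defines "R \<equiv> {r. (\<forall>i. 0 \<le> r i) \<and> (\<forall>i. i \<notin> I \<longrightarrow> r i = 0) \<and> (\<forall>i\<in>I. 1 \<le> r i * d i)}"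
  shows "(INF r\<in>R. ereal (\<Sum>i\<in>I. r i * \<Delta> i)) = ereal (\<Sum>i\<in>I. \<Delta> i / d i)"
    and "{r \<in> R. ereal (\<Sum>i\<in>I. r i * \<Delta> i) = (INF r\<in>R. ereal (\<Sum>i\<in>I. r i * \<Delta> i))}
         = {\<lambda>i. if i \<in> I then 1 / d i else 0}"
proof -
  define r\<^sub>0 where "r\<^sub>0 i = (if i \<in> I then 1 / d i else 0)" for i
  have r\<^sub>0: "r\<^sub>0 \<in> R" using d by (auto simp: R_def r\<^sub>0_def less_imp_le)
  have r\<^sub>0_le: "r\<^sub>0 i \<le> r i" if "r \<in> R" "i \<in> I" for r i
    using that d by (auto simp: R_def r\<^sub>0_def divide_le_eq)
  have sum_le: "(\<Sum>i\<in>I. r\<^sub>0 i * \<Delta> i) \<le> (\<Sum>i\<in>I. r i * \<Delta> i)" if "r \<in> R" for r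
    using r\<^sub>0_le[OF that] \<Delta> by (intro sum_mono mult_right_mono) (auto simp: less_imp_le)
  have sum_less: "(\<Sum>i\<in>I. r\<^sub>0 i * \<Delta> i) < (\<Sum>i\<in>I. r i * \<Delta> i)" if "r \<in> R" "r \<noteq> r\<^sub>0" for r
  proof -
    obtain i where "r i \<noteq> r\<^sub>0 i" using \<open>r \<noteq> r\<^sub>0\<close> by blast
    moreover have "i \<in> I" using calculation \<open>r \<in> R\<close> by (auto simp: R_def r\<^sub>0_def split: if_splits)
    ultimately have "r\<^sub>0 i * \<Delta> i < r i * \<Delta> i" using r\<^sub>0_le[OF \<open>r \<in> R\<close>] \<Delta> by force
    then show ?thesis
      using r\<^sub>0_le[OF \<open>r \<in> R\<close>] \<Delta> \<open>i \<in> I\<close> \<open>finite I\<close>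
      by (intro sum_strict_mono_ex1) (auto intro!: mult_right_mono simp: less_imp_le)
  qed
  have INF_eq: "(INF r\<in>R. ereal (\<Sum>i\<in>I. r i * \<Delta> i)) = ereal (\<Sum>i\<in>I. r\<^sub>0 i * \<Delta> i)"
    using r\<^sub>0 sum_le by (intro antisym INF_lower2[of r\<^sub>0] INF_greatest) auto
  then show "(INF r\<in>R. ereal (\<Sum>i\<in>I. r i * \<Delta> i)) = ereal (\<Sum>i\<in>I. \<Delta> i / d i)"
    by (simp add: r\<^sub>0_def)
  show "{r \<in> R. ereal (\<Sum>i\<in>I. r i * \<Delta> i) = (INF r\<in>R. ereal (\<Sum>i\<in>I. r i * \<Delta> i))}
         = {\<lambda>i. if i \<in> I then 1 / d i else 0}"
    unfolding INF_eq using r\<^sub>0 sum_less by (force simp: r\<^sub>0_def[abs_def])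
qed

locale bernoulli_bandit =
  fixes N :: nat and \<mu> :: "nat \<Rightarrow> real"
  assumes two_arms: "N \<ge> 2"
    and mean_bounds: "\<forall>i\<in>{1..N}. 0 < \<mu> i \<and> \<mu> i < 1"
    and means_decreasing: "\<forall>i\<in>{1..N}. \<forall>i'\<in>{1..N}. i < i' \<longrightarrow> \<mu> i' < \<mu> i"
begin

abbreviation "obs i \<equiv> sigvec (2^N) bandH i (bandp N \<mu>)"
abbreviation "rate i \<equiv> bern_kl (\<mu> i) (\<mu> 1)"
abbreviation "gap i \<equiv> lossdiff (2^N) bandL i 1 (bandp N \<mu>)"

definition alternatives :: "(nat \<Rightarrow> real) set" where
  "alternatives = {q \<in> clP (2^N) (cellc N (2^N) bandL 1).
                     KL 2 (obs 1) (sigvec (2^N) bandH 1 q) \<le> ereal 0}"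

definition objective :: "(nat \<Rightarrow> real) \<Rightarrow> (nat \<Rightarrow> real) \<Rightarrow> ereal" where
  "objective r q =
     (\<Sum>i\<in>{1..N} - {1}. ereal (r i) * max (KL 2 (obs i) (sigvec (2^N) bandH i q)) 0)"

lemma first_arm: "1 \<in> {1..N}"
  using two_arms by simp

lemma mean_in_unit: "i \<in> {1..N} \<Longrightarrow> 0 < \<mu> i \<and> \<mu> i < 1"
  using mean_bounds by blast

lemma mean_suboptimal: "i \<in> {1..N} - {1} \<Longrightarrow> \<mu> i < \<mu> 1"
  using means_decreasing[rule_format, OF first_arm, of i] by auto

lemma bandp_in_probsimplex: "bandp N \<mu> \<in> probsimplex (2^N)"
  unfolding bandp_eq_bernoulli_product
  using mean_in_unit by (intro bernoulli_product_in_probsimplex) (auto simp: less_imp_le)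

lemma obs_1: "i \<in> {1..N} \<Longrightarrow> obs i 1 = \<mu> i"
  unfolding bandp_eq_bernoulli_product by (rule arm_mean_bernoulli_product)

lemma obs_2: "i \<in> {1..N} \<Longrightarrow> obs i 2 = 1 - \<mu> i"
  using sigvec_bandH_2_eq[OF bandp_in_probsimplex] obs_1 by simp

lemma gap_eq: "i \<in> {1..N} - {1} \<Longrightarrow> gap i = \<mu> 1 - \<mu> i"
  using lossdiff_bandL[OF bandp_in_probsimplex] obs_1 first_arm by auto

lemma rate_pos: "i \<in> {1..N} - {1} \<Longrightarrow> 0 < rate i"
  using mean_in_unit[of i] mean_in_unit[OF first_arm] mean_suboptimal[of i]
  by (intro bern_kl_pos) auto

lemma KL_obs:
  assumes "i \<in> {1..N}" "q \<in> probsimplex (2^N)" "0 < arm_mean (2^N) i q" "arm_mean (2^N) i q < 1"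
  shows "KL 2 (obs i) (sigvec (2^N) bandH i q) = ereal (bern_kl (\<mu> i) (arm_mean (2^N) i q))"
  using assms obs_1 obs_2 mean_in_unit sigvec_bandH_2_eq by (intro KL_two_eq_bern_kl) auto

lemma KL_obs_infinite:
  assumes "i \<in> {1..N}" "q \<in> probsimplex (2^N)" "arm_mean (2^N) i q = 0 \<or> arm_mean (2^N) i q = 1"
  shows "KL 2 (obs i) (sigvec (2^N) bandH i q) = \<infinity>"
  using assms obs_1 obs_2 mean_in_unit sigvec_bandH_2_eq by (intro KL_two_infinite) auto

lemma arm_mean_bounds_if_KL_obs_le:
  assumes "i \<in> {1..N}" "q \<in> probsimplex (2^N)" "KL 2 (obs i) (sigvec (2^N) bandH i q) \<le> ereal \<delta>"
  shows "0 < arm_mean (2^N) i q \<and> arm_mean (2^N) i q < 1"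
proof (rule ccontr)
  assume "\<not> (0 < arm_mean (2^N) i q \<and> arm_mean (2^N) i q < 1)"
  then have "arm_mean (2^N) i q = 0 \<or> arm_mean (2^N) i q = 1"
    using sigvec_nonneg[OF assms(2), of bandH i 1] arm_mean_le_1[OF assms(2), of i] by linarith
  then show False using KL_obs_infinite[OF assms(1,2)] assms(3) by simp
qed

lemma alternativesD:
  assumes "q \<in> alternatives"
  shows "q \<in> probsimplex (2^N) \<and> arm_mean (2^N) 1 q = \<mu> 1
    \<and> (\<exists>i\<in>{1..N} - {1}. \<mu> 1 \<le> arm_mean (2^N) i q)"
proof -
  have q_clP: "q \<in> clP (2^N) (cellc N (2^N) bandL 1)"
    and KL_0: "KL 2 (obs 1) (sigvec (2^N) bandH 1 q) \<le> ereal 0"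
    using assms by (auto simp: alternatives_def)
  obtain i where q: "q \<in> probsimplex (2^N)" and i: "i \<in> {1..N} - {1}"
    and le: "arm_mean (2^N) 1 q \<le> arm_mean (2^N) i q"
    using clP_cellc_bandLD[OF q_clP] by blast
  have m: "0 < arm_mean (2^N) 1 q \<and> arm_mean (2^N) 1 q < 1"
    using arm_mean_bounds_if_KL_obs_le[OF first_arm q KL_0] .
  then have "bern_kl (\<mu> 1) (arm_mean (2^N) 1 q) \<le> 0"
    using KL_0 KL_obs[OF first_arm q] by simp
  then have "arm_mean (2^N) 1 q = \<mu> 1"
    using bern_kl_pos[of "\<mu> 1" "arm_mean (2^N) 1 q"] mean_in_unit[OF first_arm] m by force
  then show ?thesis using q i le by auto
qed

lemma objective_lower_bound:
  assumes "q \<in> alternatives" "\<forall>i. 0 \<le> r i"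
  shows "\<exists>i\<in>{1..N} - {1}. ereal (r i * rate i) \<le> objective r q"
proof -
  obtain i where q: "q \<in> probsimplex (2^N)" and m1: "arm_mean (2^N) 1 q = \<mu> 1"
    and i: "i \<in> {1..N} - {1}" and mi: "\<mu> 1 \<le> arm_mean (2^N) i q"
    using alternativesD[OF assms(1)] by blast
  have iN: "i \<in> {1..N}" using i by simp
  let ?term = "\<lambda>k. ereal (r k) * max (KL 2 (obs k) (sigvec (2^N) bandH k q)) 0"
  have term_i: "ereal (r i * rate i) \<le> ?term i"
  proof (cases "arm_mean (2^N) i q = 1")
    case True
    then have "KL 2 (obs i) (sigvec (2^N) bandH i q) = \<infinity>"
      using KL_obs_infinite[OF iN q] by simp
    then show ?thesis using assms(2)[rule_format, of i] by (cases "r i = 0") auto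
  next
    case False
    then have lt: "arm_mean (2^N) i q < 1" using arm_mean_le_1[OF q] by (simp add: less_le)
    have pos: "0 < arm_mean (2^N) i q" using mi mean_in_unit[OF first_arm] by linarith
    let ?K = "bern_kl (\<mu> i) (arm_mean (2^N) i q)"
    have "rate i \<le> ?K"
      using mean_in_unit[OF iN] mean_suboptimal[OF i] mi lt by (intro bern_kl_mono) auto
    then have "r i * rate i \<le> r i * ?K" and "0 \<le> ?K"
      using assms(2) rate_pos[OF i] by (auto intro: mult_left_mono)
    then show ?thesis using KL_obs[OF iN q pos lt] by simp
  qed
  have "0 \<le> ?term k" for k using assms(2) by (simp add: ereal_zero_le_0_iff)
  then have "?term i \<le> objective r q"
    unfolding objective_def using i by (subst sum.remove[of _ i]) (auto intro!: add_increasing2 sum_nonneg)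
  then show ?thesis using term_i i by (meson order_trans)
qed

text \<open>Raising the mean of arm \<open>i\<close> to \<open>\<mu> 1\<close> gives an alternative at which only arm \<open>i\<close>
  contributes to the objective.\<close>
lemma objective_at_alternative:
  assumes i: "i \<in> {1..N} - {1}"
  obtains q where "q \<in> alternatives" "\<And>r. objective r q = ereal (r i * rate i)"
proof -
  define x where "x = \<mu>(i := \<mu> 1)"
  let ?q = "bernoulli_product N x"
  have q: "?q \<in> probsimplex (2^N)"
    using mean_in_unit by (intro bernoulli_product_in_probsimplex) (auto simp: x_def less_imp_le)
  have mq: "arm_mean (2^N) k ?q = x k" if "k \<in> {1..N}" for k
    using that by (rule arm_mean_bernoulli_product)
  have x: "0 < x k \<and> x k < 1" if "k \<in> {1..N}" for k
    using mean_in_unit[OF that] mean_in_unit[OF first_arm] by (simp add: x_def)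
  have KL_q: "KL 2 (obs k) (sigvec (2^N) bandH k ?q) = ereal (bern_kl (\<mu> k) (x k))"
    if k: "k \<in> {1..N}" for k
    using KL_obs[OF k q] mq[OF k] x[OF k] by simp
  have x_1: "x 1 = \<mu> 1" and x_i: "x i = \<mu> 1" by (simp_all add: x_def)
  have "arm_mean (2^N) 1 ?q = \<mu> 1" "arm_mean (2^N) i ?q = \<mu> 1"
    using mq[OF first_arm] mq[of i] i x_1 x_i by auto
  then have "?q \<in> clP (2^N) {q' \<in> cellc N (2^N) bandL 1. arm_mean (2^N) 1 q' = arm_mean (2^N) 1 ?q}"
    using mean_in_unit[OF first_arm] by (intro in_clP_cellc_bandL[OF q i]) simp_all
  then have "?q \<in> clP (2^N) (cellc N (2^N) bandL 1)"
    by (rule subsetD[OF clP_mono[OF Collect_restrict]])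
  then have "?q \<in> alternatives"
    using KL_q[OF first_arm] x_1 by (simp add: alternatives_def bern_kl_self)
  moreover have "objective r ?q = ereal (r i * rate i)" for r
  proof -
    have "ereal (r k) * max (KL 2 (obs k) (sigvec (2^N) bandH k ?q)) 0
        = (if k = i then ereal (r i * rate i) else 0)" if k: "k \<in> {1..N} - {1}" for k
    proof (cases "k = i")
      case True
      then show ?thesis using KL_q[of i] i rate_pos[OF i] by (simp add: x_def)
    next
      case False
      then show ?thesis using KL_q[of k] k by (simp add: x_def bern_kl_self)
    qed
    then show ?thesis using i by (simp add: objective_def)
  qed
  ultimately show thesis by (rule that)
qed

lemma Rset_bandit:
  "Rset N (2^N) 2 bandL bandH 1 obs (\<lambda>i. 0) =
     {r. (\<forall>i. 0 \<le> r i) \<and> (\<forall>i. i \<notin> {1..N} - {1} \<longrightarrow> r i = 0)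
         \<and> (\<forall>i\<in>{1..N} - {1}. 1 \<le> r i * rate i)}"
proof -
  have "1 \<le> (INF q\<in>alternatives. objective r q) \<longleftrightarrow> (\<forall>i\<in>{1..N} - {1}. 1 \<le> r i * rate i)"
    if r: "\<forall>i. 0 \<le> r i" for r
  proof
    assume H: "1 \<le> (INF q\<in>alternatives. objective r q)"
    show "\<forall>i\<in>{1..N} - {1}. 1 \<le> r i * rate i"
    proof
      fix i assume "i \<in> {1..N} - {1}"
      then obtain q where "q \<in> alternatives" "objective r q = ereal (r i * rate i)"
        using objective_at_alternative by metis
      then show "1 \<le> r i * rate i"
        using order_trans[OF H INF_lower[of q alternatives "objective r"]] by simp
    qed
  next
    assume H: "\<forall>i\<in>{1..N} - {1}. 1 \<le> r i * rate i"
    show "1 \<le> (INF q\<in>alternatives. objective r q)"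
    proof (rule INF_greatest)
      fix q assume "q \<in> alternatives"
      then obtain i where "i \<in> {1..N} - {1}" "ereal (r i * rate i) \<le> objective r q"
        using objective_lower_bound r by blast
      then show "1 \<le> objective r q" using H by (metis ereal_less_eq(3) one_ereal_def order_trans)
    qed
  qed
  moreover have "Rset N (2^N) 2 bandL bandH 1 obs (\<lambda>i. 0) =
     {r. (\<forall>i. 0 \<le> r i) \<and> (\<forall>i. i \<notin> {1..N} - {1} \<longrightarrow> r i = 0)
         \<and> 1 \<le> (INF q\<in>alternatives. objective r q)}"
    unfolding Rset_def alternatives_def objective_def by (simp add: zero_ereal_def[symmetric])
  ultimately show ?thesis by blast
qed

lemma Cval_and_Rstar_bandit:
  "Cval N (2^N) 2 bandL bandH 1 (bandp N \<mu>) obs (\<lambda>i. 0) =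
     ereal (\<Sum>i\<in>{1..N} - {1}. gap i / rate i)"
  "Rstar N (2^N) 2 bandL bandH 1 (bandp N \<mu>) obs (\<lambda>i. 0) =
     {\<lambda>i. if i \<in> {1..N} - {1} then 1 / rate i else 0}"
proof -
  have "\<forall>i\<in>{1..N} - {1}. 0 < rate i" "\<forall>i\<in>{1..N} - {1}. 0 < gap i"
    using rate_pos gap_eq mean_suboptimal by auto
  note min = linear_minimization_shifted_orthant[OF finite_Diff[OF finite_atLeastAtMost] this]
  show "Cval N (2^N) 2 bandL bandH 1 (bandp N \<mu>) obs (\<lambda>i. 0) =
     ereal (\<Sum>i\<in>{1..N} - {1}. gap i / rate i)"
    unfolding Cval_def Rset_bandit by (rule min(1))
  show "Rstar N (2^N) 2 bandL bandH 1 (bandp N \<mu>) obs (\<lambda>i. 0) =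
     {\<lambda>i. if i \<in> {1..N} - {1} then 1 / rate i else 0}"
    unfolding Rstar_def Cval_def Rset_bandit by (rule min(2))
qed

abbreviation "KL_sublevel \<delta> \<equiv>
  {q \<in> probsimplex (2^N). KL 2 (obs 1) (sigvec (2^N) bandH 1 q) \<le> ereal \<delta>}"

lemma clP_intP_cellc_inter_KL_sublevel:
  "clP (2^N) (intP (2^N) (cellc N (2^N) bandL 1) \<inter> KL_sublevel \<delta>)
   = clP (2^N) (clP (2^N) (cellc N (2^N) bandL 1) \<inter> KL_sublevel \<delta>)"
proof (rule clP_intP_cellc_bandL_inter)
  show "\<forall>q\<in>KL_sublevel \<delta>. arm_mean (2^N) 1 q < 1"
    using arm_mean_bounds_if_KL_obs_le[OF first_arm] by blast
  show "q' \<in> KL_sublevel \<delta>" if "q \<in> KL_sublevel \<delta>" "q' \<in> probsimplex (2^N)"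
    "arm_mean (2^N) 1 q' = arm_mean (2^N) 1 q" for q q'
    using that KL_two_cong[of "sigvec (2^N) bandH 1 q'" "sigvec (2^N) bandH 1 q" "obs 1"]
      sigvec_bandH_2_eq[of q' "2^N" 1] sigvec_bandH_2_eq[of q "2^N" 1] by auto
qed

end

theorem corollary4:
  fixes N :: nat and \<mu> :: "nat \<Rightarrow> real"
  assumes "N \<ge> 2"
    and "\<forall>i\<in>{1..N}. 0 < \<mu> i \<and> \<mu> i < 1"
    and "\<forall>i\<in>{1..N}. \<forall>i'\<in>{1..N}. i < i' \<longrightarrow> \<mu> i' < \<mu> i"
  shows "(\<exists>r. Rstar N (2 ^ N) 2 bandL bandH 1 (bandp N \<mu>)
                 (\<lambda>i. sigvec (2 ^ N) bandH i (bandp N \<mu>)) (\<lambda>i. 0) = {r})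
    \<and> (\<exists>\<epsilon>>0. \<forall>\<delta>. 0 \<le> \<delta> \<and> \<delta> < \<epsilon> \<longrightarrow>
         (let S\<delta> = {q \<in> probsimplex (2 ^ N).
                     KL 2 (sigvec (2 ^ N) bandH 1 (bandp N \<mu>)) (sigvec (2 ^ N) bandH 1 q) \<le> ereal \<delta>}
          in clP (2 ^ N) (intP (2 ^ N) (cellc N (2 ^ N) bandL 1) \<inter> S\<delta>)
             = clP (2 ^ N) (clP (2 ^ N) (cellc N (2 ^ N) bandL 1) \<inter> S\<delta>)))
    \<and> Cval N (2 ^ N) 2 bandL bandH 1 (bandp N \<mu>)
          (\<lambda>i. sigvec (2 ^ N) bandH i (bandp N \<mu>)) (\<lambda>i. 0)
        = ereal (\<Sum>i\<in>{1..N} - {1}. lossdiff (2 ^ N) bandL i 1 (bandp N \<mu>) / bern_kl (\<mu> i) (\<mu> 1))"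
proof -
  interpret bernoulli_bandit N \<mu> using assms by unfold_locales
  show ?thesis
    using Cval_and_Rstar_bandit clP_intP_cellc_inter_KL_sublevel
    by (auto simp: Let_def intro!: exI[of _ 1])
qed

end
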